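(* Under Fisher's null $H_0$, if $\Gamma^\star\preccurlyeq\Gamma\in[1,\infty]^I$ and Conditions A1 and A2($\Gamma$) hold, then $$\tilde p_\Gamma=1-\Phi\Big(\frac{T-\mu(\Gamma)}{\sigma(\Gamma)}\Big)\cdot\mathbb 1\{T\ge\mu(\Gamma)\}$$ satisfies $\limsup_{I\to\infty}\mathbb P(\tilde p_\Gamma\le\alpha)\le\alpha$ for all $\alpha\in(0,1)$.
   Context: Setting: sequence of matched studies indexed by $I\to\infty$; set $i$ has $n_i\ge2$ units; potential outcomes fixed; $Z$ (one treated unit per set) random with true mechanism $\mathbb P(Z=z)=\prod_i\prod_j(p^\star_{ij})^{z_{ij}}$, $\sum_jp^\star_{ij}=1$; $\Gamma^\star_i=\max_jp^\star_{ij}/\min_kp^\star_{ik}\in[1,\infty]$; $\preccurlyeq$ is coordinatewise $\le$. $H_0$: $Y_{ij}(1)=Y_{ij}(0)$ for all $i,j$. $T=\sum_iT_i$, $T_i=\sum_jZ_{ij}q_{ij}$, $q_{ij}$ fixed functions of $Y(0)$; $\mu_i=\mathbb ET_i$, $v_i^2=\mathrm{Var}T_i$ (true). Sort $q_{i(1)}\le\dots\le q_{i(n_i)}$, $R_i=q_{i(n_i)}-q_{i(1)}$. For $\Gamma_i<\infty$, $1\le a\le n_i-1$: $\mu_{ia}(\Gamma_i)=\frac{\sum_{j\le a}q_{i(j)}+\Gamma_i\sum_{j>a}q_{i(j)}}{a+\Gamma_i(n_i-a)}$, $v_{ia}^2(\Gamma_i)=\frac{\sum_{j\le a}q_{i(j)}^2+\Gamma_i\sum_{j>a}q_{i(j)}^2}{a+\Gamma_i(n_i-a)}-\mu_{ia}(\Gamma_i)^2$;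 $\mu_i(\Gamma_i)=\max_a\mu_{ia}(\Gamma_i)$, $v_i^2(\Gamma_i)=\max\{v_{ia}^2(\Gamma_i):\mu_{ia}(\Gamma_i)=\mu_i(\Gamma_i)\}$; $\mu_i(\infty)=q_{i(n_i)}$, $v_i^2(\infty)=0$; $\mu(\Gamma)=\sum_i\mu_i(\Gamma_i)$, $\sigma^2(\Gamma)=\sum_iv_i^2(\Gamma_i)$. Condition A1: $(\max_iR_i^2)/\sum_iR_i^2/(n_i\Gamma^\star_i)^3\to0$. Condition A2($\Gamma$): with $\mathcal A_\Gamma=\{i:v_i^2>v_i^2(\Gamma_i)\}$, $\Delta_\mu(\Gamma)=|\mathcal A_\Gamma|^{-1}\sum_{i\in\mathcal A_\Gamma}\{\mu_i(\Gamma_i)-\mu_i\}$, $\Delta_{v^2}(\Gamma)=|\mathcal A_\Gamma|^{-1}\sum_{i\in\mathcal A_\Gamma}\{v_i^2-v_i^2(\Gamma_i)\}$ (ratio $=\infty$ if $\mathcal A_\Gamma=\emptyset$), $\frac{\Delta_\mu(\Gamma)}{\Delta_{v^2}(\Gamma)}\sqrt{\sum_iR_i^2/(n_i\Gamma^\star_i)^3}\to\infty$. *)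

theory Defs
  imports "HOL-Probability.Probability"
begin

definition Phi :: "real \<Rightarrow> real" where
  "Phi x = cdf std_normal_distribution x"

(* Order statistics of the scores q_0,...,q_{n-1} of one matched set;
   qs q n j (0-indexed) is q_{i(j+1)} of the paper *)
definition qs :: "(nat \<Rightarrow> real) \<Rightarrow> nat \<Rightarrow> nat \<Rightarrow> real" where
  "qs q n j = sort (map q [0..<n]) ! j"

definition rangeR :: "(nat \<Rightarrow> real) \<Rightarrow> nat \<Rightarrow> real" where
  "rangeR q n = qs q n (n - 1) - qs q n 0"

definition mu_a :: "(nat \<Rightarrow> real) \<Rightarrow> nat \<Rightarrow> real \<Rightarrow> nat \<Rightarrow> real" where
  "mu_a q n G a =
     ((\<Sum>j<a. qs q n j) + G * (\<Sum>j\<in>{a..<n}. qs q n j)) / (real a + G * real (n - a))"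

definition v2_a :: "(nat \<Rightarrow> real) \<Rightarrow> nat \<Rightarrow> real \<Rightarrow> nat \<Rightarrow> real" where
  "v2_a q n G a =
     ((\<Sum>j<a. (qs q n j)\<^sup>2) + G * (\<Sum>j\<in>{a..<n}. (qs q n j)\<^sup>2)) / (real a + G * real (n - a))
     - (mu_a q n G a)\<^sup>2"

definition mu_G :: "(nat \<Rightarrow> real) \<Rightarrow> nat \<Rightarrow> ereal \<Rightarrow> real" where
  "mu_G q n G = (if G = \<infinity> then qs q n (n - 1)
                 else Max ((mu_a q n (real_of_ereal G)) ` {1..n-1}))"

definition v2_G :: "(nat \<Rightarrow> real) \<Rightarrow> nat \<Rightarrow> ereal \<Rightarrow> real" where
  "v2_G q n G = (if G = \<infinity> then 0
                 else Max ((v2_a q n (real_of_ereal G)) `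
                      {a \<in> {1..n-1}. mu_a q n (real_of_ereal G) a = mu_G q n G}))"

definition Gstar :: "(nat \<Rightarrow> real) \<Rightarrow> nat \<Rightarrow> ereal" where
  "Gstar p n = (if Min (p ` {..<n}) > 0
                then ereal (Max (p ` {..<n}) / Min (p ` {..<n})) else \<infinity>)"

definition wA1 :: "(nat \<Rightarrow> real) \<Rightarrow> (nat \<Rightarrow> real) \<Rightarrow> nat \<Rightarrow> real" where
  "wA1 p q n = (case Gstar p n of ereal g \<Rightarrow> (rangeR q n)\<^sup>2 / (real n * g) ^ 3 | _ \<Rightarrow> 0)"

(* true mean and variance of T_i = sum_j Z_ij q_ij *)
definition mu_true :: "(nat \<Rightarrow> real) \<Rightarrow> (nat \<Rightarrow> real) \<Rightarrow> nat \<Rightarrow> real" where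
  "mu_true p q n = (\<Sum>j<n. p j * q j)"

definition v2_true :: "(nat \<Rightarrow> real) \<Rightarrow> (nat \<Rightarrow> real) \<Rightarrow> nat \<Rightarrow> real" where
  "v2_true p q n = (\<Sum>j<n. p j * (q j)\<^sup>2) - (mu_true p q n)\<^sup>2"

end

(* Under the null hypothesis T is a sum of independent bounded terms T_i. Each set contributes
   variance at least R_i^2 / (2 (n_i Gamma*_i)^3), so Condition A1 is a Lindeberg condition and
   (T - sum mu_i) / sqrt (sum v_i^2) is asymptotically standard normal, which is proved with
   characteristic functions and Levy's continuity theorem. Because Gamma* <= Gamma, every true mean
   mu_i is at most the worst-case mean mu_i(Gamma_i). Rejection at level alpha means
   T >= mu(Gamma) + z sigma(Gamma) with z the (1 - alpha)-quantile of Phi, and Condition A2 makes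
   the excess sum_i (mu_i(Gamma_i) - mu_i) of the means outweigh z times the excess of
   sqrt (sum v_i^2) over sigma(Gamma). So rejection forces the standardized statistic above z, an
   event of limiting probability at most 1 - Phi z <= alpha. *)

theory Submission
  imports Defs
begin

section \<open>The standard normal distribution function\<close>

lemma Phi_mono: "x \<le> y \<Longrightarrow> Phi x \<le> Phi y"
proof -
  interpret real_distribution std_normal_distribution by (rule real_dist_normal_dist)
  show "x \<le> y \<Longrightarrow> Phi x \<le> Phi y" unfolding Phi_def by (rule cdf_nondecreasing)
qed

lemma isCont_Phi: "isCont Phi x"
proof -
  interpret real_distribution std_normal_distribution by (rule real_dist_normal_dist)
  have "emeasure std_normal_distribution {x}
      = (\<integral>\<^sup>+y. ennreal (std_normal_density y) * indicator {x} y \<partial>lborel)"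
    by (rule emeasure_density) auto
  also have "\<dots> = 0"
  proof -
    have ae: "AE y in lborel. ennreal (std_normal_density y) * indicator {x} y = 0"
      using AE_lborel_singleton[of x] by eventually_elim auto
    show ?thesis by (subst nn_integral_cong_AE[OF ae]) simp
  qed
  finally have "measure std_normal_distribution {x} = 0" by (simp add: measure_def)
  then have "isCont (cdf std_normal_distribution) x" by (simp add: isCont_cdf)
  then show ?thesis by (simp add: Phi_def[abs_def])
qed

lemma Phi_quantile:
  fixes \<beta> :: real
  assumes "0 < \<beta>" "\<beta> < 1"
  obtains z where "\<beta> \<le> Phi z" and "\<And>y. \<beta> \<le> Phi y \<Longrightarrow> z \<le> y"
proof -
  interpret real_distribution std_normal_distribution by (rule real_dist_normal_dist)
  define S where "S = {y. \<beta> \<le> Phi y}"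
  have "eventually (\<lambda>y. \<beta> < Phi y) at_top"
    using order_tendstoD(1)[OF cdf_lim_at_top_prob] assms by (simp add: Phi_def[abs_def])
  then obtain y where "\<beta> < Phi y" by (metis eventually_at_top_linorder order_refl)
  then have "S \<noteq> {}" unfolding S_def by (auto intro: less_imp_le)
  moreover have "eventually (\<lambda>y. Phi y < \<beta>) at_bot"
    using order_tendstoD(2)[OF cdf_lim_at_bot] assms by (simp add: Phi_def[abs_def])
  then obtain b where b: "\<And>y. y \<le> b \<Longrightarrow> Phi y < \<beta>" by (auto simp: eventually_at_bot_linorder)
  have "bdd_below S"
  proof (rule bdd_belowI)
    fix y assume "y \<in> S"
    then show "b \<le> y" using b[of y] unfolding S_def by force
  qed
  moreover have "closed S"
    unfolding S_def using isCont_Phi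
    by (intro closed_Collect_le continuous_intros continuous_at_imp_continuous_on) auto
  ultimately have "Inf S \<in> S" by (rule closed_contains_Inf)
  moreover have "Inf S \<le> y" if "\<beta> \<le> Phi y" for y
    using that \<open>bdd_below S\<close> by (intro cInf_lower) (auto simp: S_def)
  ultimately show thesis using that unfolding S_def by blast
qed

section \<open>Matched designs\<close>

text \<open>In a design with \<open>I\<close> matched sets, \<open>z i < n i\<close> is the treated unit of set \<open>i\<close>, chosen
  independently across sets with probabilities \<open>p i\<close>.\<close>

definition design_prob ::
    "nat \<Rightarrow> (nat \<Rightarrow> nat) \<Rightarrow> (nat \<Rightarrow> nat \<Rightarrow> real) \<Rightarrow> ((nat \<Rightarrow> nat) \<Rightarrow> bool) \<Rightarrow> real" where
  "design_prob I n p P =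
     (\<Sum>z\<in>PiE {..<I} (\<lambda>i. {..<n i}). (\<Prod>i<I. p i (z i)) * (if P z then 1 else 0))"

lemma design_weights_sum:
  fixes n :: "nat \<Rightarrow> nat" and p :: "nat \<Rightarrow> nat \<Rightarrow> real"
  assumes "\<And>i. i < I \<Longrightarrow> (\<Sum>j<n i. p i j) = 1"
  shows "(\<Sum>z\<in>PiE {..<I} (\<lambda>i. {..<n i}). \<Prod>i<I. p i (z i)) = 1"
proof -
  have "(\<Sum>z\<in>PiE {..<I} (\<lambda>i. {..<n i}). \<Prod>i<I. p i (z i)) = (\<Prod>i<I. \<Sum>j<n i. p i j)"
    by (rule prod_sum_PiE[symmetric]) auto
  also have "\<dots> = 1" using assms by simp
  finally show ?thesis .
qed

lemma design_weights_nonneg: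
  fixes n :: "nat \<Rightarrow> nat" and p :: "nat \<Rightarrow> nat \<Rightarrow> real"
  assumes "\<And>i j. i < I \<Longrightarrow> j < n i \<Longrightarrow> 0 \<le> p i j" and "z \<in> PiE {..<I} (\<lambda>i. {..<n i})"
  shows "0 \<le> (\<Prod>i<I. p i (z i))"
  using assms by (intro prod_nonneg) (auto simp: PiE_iff)

lemma design_prob_mono:
  fixes n :: "nat \<Rightarrow> nat" and p :: "nat \<Rightarrow> nat \<Rightarrow> real"
  assumes "\<And>i j. i < I \<Longrightarrow> j < n i \<Longrightarrow> 0 \<le> p i j"
    and "\<And>z. z \<in> PiE {..<I} (\<lambda>i. {..<n i}) \<Longrightarrow> P z \<Longrightarrow> Q z"
  shows "design_prob I n p P \<le> design_prob I n p Q"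
  unfolding design_prob_def
  using assms design_weights_nonneg[OF assms(1)] by (intro sum_mono mult_left_mono) auto

lemma design_prob_Not:
  fixes n :: "nat \<Rightarrow> nat" and p :: "nat \<Rightarrow> nat \<Rightarrow> real"
  assumes "\<And>i. i < I \<Longrightarrow> (\<Sum>j<n i. p i j) = 1"
  shows "design_prob I n p (\<lambda>z. \<not> P z) = 1 - design_prob I n p P"
proof -
  let ?\<Omega> = "PiE {..<I} (\<lambda>i. {..<n i})" and ?w = "\<lambda>z. \<Prod>i<I. p i (z i)"
  have "design_prob I n p (\<lambda>z. \<not> P z) = (\<Sum>z\<in>?\<Omega>. ?w z - ?w z * (if P z then 1 else 0))"
    unfolding design_prob_def by (intro sum.cong) auto
  also have "\<dots> = (\<Sum>z\<in>?\<Omega>. ?w z) - design_prob I n p P"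
    unfolding design_prob_def by (rule sum_subtractf)
  also have "(\<Sum>z\<in>?\<Omega>. ?w z) = 1"
    by (rule design_weights_sum) (use assms in auto)
  finally show ?thesis .
qed

lemma design_prob_le_one_minus:
  fixes n :: "nat \<Rightarrow> nat" and p :: "nat \<Rightarrow> nat \<Rightarrow> real"
  assumes "\<And>i j. i < I \<Longrightarrow> j < n i \<Longrightarrow> 0 \<le> p i j" and "\<And>i. i < I \<Longrightarrow> (\<Sum>j<n i. p i j) = 1"
    and "\<And>z. z \<in> PiE {..<I} (\<lambda>i. {..<n i}) \<Longrightarrow> P z \<Longrightarrow> \<not> Q z"
  shows "design_prob I n p P \<le> 1 - design_prob I n p Q"
proof -
  have "design_prob I n p P \<le> design_prob I n p (\<lambda>z. \<not> Q z)" using assms(1,3) by (rule design_prob_mono)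
  also have "\<dots> = 1 - design_prob I n p Q" using assms(2) by (rule design_prob_Not)
  finally show ?thesis .
qed

lemma finite_support_real_distribution:
  fixes \<Omega> :: "'a set" and w Y :: "'a \<Rightarrow> real"
  assumes fin: "finite \<Omega>" and nn: "\<And>\<omega>. \<omega> \<in> \<Omega> \<Longrightarrow> 0 \<le> w \<omega>" and s1: "sum w \<Omega> = 1"
  shows "\<exists>M. real_distribution M
    \<and> (\<forall>x. cdf M x = (\<Sum>\<omega>\<in>\<Omega>. w \<omega> * (if Y \<omega> \<le> x then 1 else 0)))
    \<and> (\<forall>t. char M t = (\<Sum>\<omega>\<in>\<Omega>. complex_of_real (w \<omega>) * iexp (t * Y \<omega>)))"
proof -
  define f where "f \<omega> = (if \<omega> \<in> \<Omega> then w \<omega> else 0)" for \<omega>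
  have fnn: "\<And>x. 0 \<le> f x" using nn by (simp add: f_def)
  have "(\<integral>\<^sup>+x. ennreal (f x) \<partial>count_space UNIV) = (\<Sum>x\<in>\<Omega>. ennreal (f x))"
    by (rule nn_integral_count_space'[OF fin]) (auto simp: f_def)
  also have "\<dots> = ennreal (\<Sum>x\<in>\<Omega>. f x)" using fnn by (simp add: sum_ennreal)
  also have "\<dots> = 1" using s1 by (simp add: f_def)
  finally have fint: "(\<integral>\<^sup>+x. f x \<partial>count_space UNIV) = 1" .
  define P where "P = embed_pmf f"
  have pmfP: "pmf P x = f x" for x unfolding P_def using pmf_embed_pmf[OF fnn fint] .
  have setP: "set_pmf P \<subseteq> \<Omega>" by (auto simp: set_pmf_eq pmfP f_def)
  define M where "M = distr (measure_pmf P) borel Y"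
  have "real_distribution M"
    unfolding M_def by (rule prob_space.real_distribution_distr) (auto simp: prob_space_measure_pmf)
  moreover have "cdf M x = (\<Sum>\<omega>\<in>\<Omega>. w \<omega> * (if Y \<omega> \<le> x then 1 else 0))" for x
  proof -
    have "cdf M x = (\<integral>\<omega>. indicator (Y -` {..x}) \<omega> \<partial>measure_pmf P)"
      unfolding cdf_def M_def by (subst measure_distr) auto
    also have "\<dots> = (\<Sum>\<omega>\<in>\<Omega>. indicator (Y -` {..x}) \<omega> * pmf P \<omega>)"
      by (rule integral_measure_pmf_real[OF fin]) (use setP in auto)
    also have "\<dots> = (\<Sum>\<omega>\<in>\<Omega>. w \<omega> * (if Y \<omega> \<le> x then 1 else 0))"
      by (intro sum.cong) (auto simp: pmfP f_def indicator_def)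
    finally show ?thesis .
  qed
  moreover have "char M t = (\<Sum>\<omega>\<in>\<Omega>. complex_of_real (w \<omega>) * iexp (t * Y \<omega>))" for t
  proof -
    have "char M t = (CLINT \<omega>|measure_pmf P. iexp (t * Y \<omega>))"
      unfolding char_def M_def by (subst integral_distr) auto
    also have "\<dots> = (\<Sum>\<omega>\<in>\<Omega>. pmf P \<omega> *\<^sub>R iexp (t * Y \<omega>))"
      by (rule integral_measure_pmf[OF fin]) (use setP in auto)
    finally show ?thesis by (simp add: pmfP f_def scaleR_conv_of_real)
  qed
  ultimately show ?thesis by blast
qed

section \<open>A central limit theorem for matched designs\<close>

lemma abs_exp_neg_minus_linear_le:
  fixes x :: real
  assumes "0 \<le> x"
  shows "\<bar>exp (-x) - (1 - x)\<bar> \<le> x^2 / 2"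
proof -
  define g where "g y = 1 - y + y^2/2 - exp (-y)" for y :: real
  have "g 0 \<le> g x"
  proof (rule DERIV_nonneg_imp_nondecreasing[OF assms])
    fix y :: real assume "0 \<le> y" "y \<le> x"
    have "DERIV g y :> (-1 + y + exp (-y))"
      unfolding g_def by (auto intro!: derivative_eq_intros simp: power2_eq_square)
    moreover have "0 \<le> -1 + y + exp (-y)" using exp_ge_add_one_self[of "-y"] by simp
    ultimately show "\<exists>d. DERIV g y :> d \<and> 0 \<le> d" by blast
  qed
  then show ?thesis using exp_ge_add_one_self[of "-x"] by (simp add: g_def abs_le_iff)
qed

lemma abs_prod_one_minus_exp_le:
  fixes x :: "'i \<Rightarrow> real" and X :: real
  assumes "finite A" and "\<And>i. i \<in> A \<Longrightarrow> 0 \<le> x i" and "\<And>i. i \<in> A \<Longrightarrow> x i \<le> X" and "X \<le> 2"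
  shows "\<bar>(\<Prod>i\<in>A. 1 - x i) - exp (- (\<Sum>i\<in>A. x i))\<bar> \<le> X * (\<Sum>i\<in>A. x i) / 2"
proof -
  have "exp (- (\<Sum>i\<in>A. x i)) = (\<Prod>i\<in>A. exp (- x i))"
    using assms(1) by (simp add: exp_sum sum_negf[symmetric])
  moreover have "\<bar>(\<Prod>i\<in>A. 1 - x i) - (\<Prod>i\<in>A. exp (- x i))\<bar> \<le> (\<Sum>i\<in>A. \<bar>(1 - x i) - exp (- x i)\<bar>)"
    using norm_prod_diff[of A "\<lambda>i. 1 - x i" "\<lambda>i. exp (- x i)"] assms(2-4) by force
  moreover have "(\<Sum>i\<in>A. \<bar>(1 - x i) - exp (- x i)\<bar>) \<le> (\<Sum>i\<in>A. X * x i / 2)"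
  proof (rule sum_mono)
    fix i assume i: "i \<in> A"
    have "\<bar>(1 - x i) - exp (- x i)\<bar> \<le> (x i)^2 / 2"
      using abs_exp_neg_minus_linear_le assms(2)[OF i] by (simp add: abs_minus_commute)
    also have "\<dots> \<le> X * x i / 2"
      using mult_right_mono[OF assms(3)[OF i] assms(2)[OF i]] by (simp add: power2_eq_square)
    finally show "\<bar>(1 - x i) - exp (- x i)\<bar> \<le> X * x i / 2" .
  qed
  ultimately show ?thesis by (simp add: sum_distrib_left sum_divide_distrib)
qed

lemma char_centered_approx:
  fixes p d :: "nat \<Rightarrow> real" and m :: nat and u R :: real
  assumes pnn: "\<And>j. j < m \<Longrightarrow> 0 \<le> p j" and ps: "(\<Sum>j<m. p j) = 1"
    and pd: "(\<Sum>j<m. p j * d j) = 0" and db: "\<And>j. j < m \<Longrightarrow> \<bar>d j\<bar> \<le> R"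
  shows "cmod ((\<Sum>j<m. complex_of_real (p j) * iexp (u * d j))
            - complex_of_real (1 - u^2 * (\<Sum>j<m. p j * (d j)^2) / 2))
         \<le> \<bar>u\<bar>^3 * R * (\<Sum>j<m. p j * (d j)^2) / 6"
proof -
  define r where "r j = iexp (u * d j) - (1 + \<i> * (u * d j) - (complex_of_real (u * d j))^2 / 2)" for j
  have eq: "(\<Sum>j<m. complex_of_real (p j) * iexp (u * d j))
            - complex_of_real (1 - u^2 * (\<Sum>j<m. p j * (d j)^2) / 2)
      = (\<Sum>j<m. complex_of_real (p j) * r j)"
  proof -
    have "(\<Sum>j<m. complex_of_real (p j) * r j)
        = (\<Sum>j<m. complex_of_real (p j) * iexp (u * d j)) - of_real (\<Sum>j<m. p j)
          - \<i> * u * of_real (\<Sum>j<m. p j * d j) + u^2/2 * of_real (\<Sum>j<m. p j * (d j)^2)"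
      unfolding r_def
      by (simp add: algebra_simps sum.distrib sum_subtractf sum_distrib_left power2_eq_square of_real_sum)
    also have "\<dots> = (\<Sum>j<m. complex_of_real (p j) * iexp (u * d j))
            - complex_of_real (1 - u^2 * (\<Sum>j<m. p j * (d j)^2) / 2)"
      unfolding ps pd by (simp add: algebra_simps)
    finally show ?thesis by simp
  qed
  have rj: "cmod (r j) \<le> \<bar>u\<bar>^3 * R * (d j)^2 / 6" if j: "j < m" for j
  proof -
    have "cmod (r j) \<le> \<bar>u * d j\<bar>^3 / 6"
      using iexp_approx1[of "u * d j" 2]
      by (simp add: r_def numeral_3_eq_3 numeral_2_eq_2 power2_eq_square field_simps)
    also have "\<bar>u * d j\<bar>^3 = \<bar>u\<bar>^3 * (\<bar>d j\<bar> * (d j)^2)"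
      by (simp add: power_mult_distrib power2_eq_square numeral_3_eq_3 abs_mult_self_eq flip: abs_mult)
    also have "\<dots> \<le> \<bar>u\<bar>^3 * (R * (d j)^2)"
      using db[OF j] by (intro mult_left_mono mult_right_mono) auto
    finally show ?thesis by (simp add: mult.assoc)
  qed
  have "cmod (\<Sum>j<m. complex_of_real (p j) * r j) \<le> (\<Sum>j<m. p j * (\<bar>u\<bar>^3 * R * (d j)^2 / 6))"
  proof (intro norm_sum[THEN order_trans] sum_mono)
    fix j assume "j \<in> {..<m}"
    then show "cmod (complex_of_real (p j) * r j) \<le> p j * (\<bar>u\<bar>^3 * R * (d j)^2 / 6)"
      using pnn[of j] mult_left_mono[OF rj[of j], of "p j"] by (simp add: norm_mult)
  qed
  also have "\<dots> = \<bar>u\<bar>^3 * R * (\<Sum>j<m. p j * (d j)^2) / 6"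
    by (simp add: sum_distrib_left sum_divide_distrib algebra_simps)
  finally show ?thesis unfolding eq .
qed

lemma char_design_factorization:
  fixes n :: "nat \<Rightarrow> nat" and p d :: "nat \<Rightarrow> nat \<Rightarrow> real" and s t :: real
  shows "(\<Sum>z\<in>PiE {..<I} (\<lambda>i. {..<n i}).
            complex_of_real (\<Prod>i<I. p i (z i)) * iexp (t * ((\<Sum>i<I. d i (z i)) / s)))
       = (\<Prod>i<I. \<Sum>j<n i. complex_of_real (p i j) * iexp (t / s * d i j))"
proof -
  have "complex_of_real (\<Prod>i<I. p i (z i)) * iexp (t * ((\<Sum>i<I. d i (z i)) / s))
      = (\<Prod>i<I. complex_of_real (p i (z i)) * iexp (t / s * d i (z i)))" for z
  proof -
    have "t * ((\<Sum>i<I. d i (z i)) / s) = (\<Sum>i<I. t / s * d i (z i))"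
      by (simp add: sum_distrib_left sum_divide_distrib)
    then show ?thesis by (simp add: prod.distrib of_real_prod of_real_sum sum_distrib_left exp_sum)
  qed
  then show ?thesis by (simp add: prod_sum_PiE)
qed

lemma norm_prod_char_minus_prod_quadratic_le:
  fixes I :: nat and n :: "nat \<Rightarrow> nat" and p d :: "nat \<Rightarrow> nat \<Rightarrow> real"
    and R :: "nat \<Rightarrow> real" and u Rmax :: real
  assumes pnn: "\<And>i j. i < I \<Longrightarrow> j < n i \<Longrightarrow> 0 \<le> p i j"
    and ps: "\<And>i. i < I \<Longrightarrow> (\<Sum>j<n i. p i j) = 1"
    and pd: "\<And>i. i < I \<Longrightarrow> (\<Sum>j<n i. p i j * d i j) = 0"
    and db: "\<And>i j. i < I \<Longrightarrow> j < n i \<Longrightarrow> \<bar>d i j\<bar> \<le> R i"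
    and R: "\<And>i. i < I \<Longrightarrow> R i \<le> Rmax"
    and small: "\<And>i. i < I \<Longrightarrow> u^2 * (\<Sum>j<n i. p i j * (d i j)^2) \<le> 4"
  shows "cmod ((\<Prod>i<I. \<Sum>j<n i. complex_of_real (p i j) * iexp (u * d i j))
            - (\<Prod>i<I. complex_of_real (1 - u^2 * (\<Sum>j<n i. p i j * (d i j)^2) / 2)))
         \<le> \<bar>u\<bar>^3 * Rmax * (\<Sum>i<I. \<Sum>j<n i. p i j * (d i j)^2) / 6"
proof -
  define v where "v i = (\<Sum>j<n i. p i j * (d i j)^2)" for i
  define \<phi> where "\<phi> i = (\<Sum>j<n i. complex_of_real (p i j) * iexp (u * d i j))" for i
  have vnn: "0 \<le> v i" if "i < I" for i
    unfolding v_def using pnn that by (intro sum_nonneg mult_nonneg_nonneg) auto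
  have \<phi>1: "cmod (\<phi> i) \<le> 1" if i: "i < I" for i
  proof -
    have "cmod (\<phi> i) \<le> (\<Sum>j<n i. cmod (complex_of_real (p i j) * iexp (u * d i j)))"
      unfolding \<phi>_def by (rule norm_sum)
    also have "\<dots> = (\<Sum>j<n i. p i j)" using pnn[OF i] by (intro sum.cong) (auto simp: norm_mult)
    finally show ?thesis using ps[OF i] by simp
  qed
  have quadratic1: "cmod (complex_of_real (1 - u^2 * v i / 2)) \<le> 1" if "i < I" for i
  proof -
    have "0 \<le> u^2 * v i" "u^2 * v i \<le> 4" using vnn[OF that] small[OF that] unfolding v_def by simp_all
    then show ?thesis by (simp only: norm_of_real)
  qed
  have "cmod ((\<Prod>i<I. \<phi> i) - (\<Prod>i<I. complex_of_real (1 - u^2 * v i / 2)))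
      \<le> (\<Sum>i<I. cmod (\<phi> i - complex_of_real (1 - u^2 * v i / 2)))"
    by (intro norm_prod_diff) (simp_all only: lessThan_iff \<phi>1 quadratic1)
  also have "\<dots> \<le> (\<Sum>i<I. \<bar>u\<bar>^3 * Rmax * v i / 6)"
  proof (rule sum_mono)
    fix i assume "i \<in> {..<I}"
    then have i: "i < I" by simp
    have "cmod (\<phi> i - complex_of_real (1 - u^2 * v i / 2)) \<le> \<bar>u\<bar>^3 * R i * v i / 6"
      unfolding \<phi>_def v_def using pnn ps pd db i by (intro char_centered_approx) auto
    also have "\<dots> \<le> \<bar>u\<bar>^3 * Rmax * v i / 6"
      using R[OF i] vnn[OF i] by (intro divide_right_mono mult_right_mono mult_left_mono) auto
    finally show "cmod (\<phi> i - complex_of_real (1 - u^2 * v i / 2)) \<le> \<bar>u\<bar>^3 * Rmax * v i / 6" .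
  qed
  also have "\<dots> = \<bar>u\<bar>^3 * Rmax * (\<Sum>i<I. v i) / 6"
    by (simp add: sum_distrib_left sum_divide_distrib)
  finally show ?thesis unfolding \<phi>_def v_def .
qed

lemma clt_char_error_bound:
  fixes I :: nat and n :: "nat \<Rightarrow> nat" and p d :: "nat \<Rightarrow> nat \<Rightarrow> real"
    and R :: "nat \<Rightarrow> real" and Rm s t :: real
  assumes pnn: "\<And>i j. i < I \<Longrightarrow> j < n i \<Longrightarrow> 0 \<le> p i j"
    and ps: "\<And>i. i < I \<Longrightarrow> (\<Sum>j<n i. p i j) = 1"
    and pd: "\<And>i. i < I \<Longrightarrow> (\<Sum>j<n i. p i j * d i j) = 0"
    and db: "\<And>i j. i < I \<Longrightarrow> j < n i \<Longrightarrow> \<bar>d i j\<bar> \<le> R i"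
    and Rm: "\<And>i. i < I \<Longrightarrow> (R i)^2 \<le> Rm"
    and Rnn: "\<And>i. i < I \<Longrightarrow> 0 \<le> R i"
    and s2: "s^2 = (\<Sum>i<I. \<Sum>j<n i. p i j * (d i j)^2)"
    and spos: "0 < s"
    and small: "t^2 * Rm / s^2 \<le> 4"
  shows "cmod ((\<Prod>i<I. \<Sum>j<n i. complex_of_real (p i j) * iexp (t / s * d i j))
            - complex_of_real (exp (-(t^2)/2)))
         \<le> \<bar>t\<bar>^3 / 6 * sqrt (Rm / s^2) + t^4 / 8 * (Rm / s^2)"
proof -
  define u where "u = t / s"
  define x where "x i = u^2 * (\<Sum>j<n i. p i j * (d i j)^2) / 2" for i
  have xnn: "0 \<le> x i" if "i < I" for i
    unfolding x_def using pnn that by (intro divide_nonneg_pos mult_nonneg_nonneg sum_nonneg) auto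
  have xle: "x i \<le> u^2 * Rm / 2" if i: "i < I" for i
  proof -
    have "(\<Sum>j<n i. p i j * (d i j)^2) \<le> (\<Sum>j<n i. p i j * (R i)^2)"
      using pnn[OF i] db[OF i] Rnn[OF i]
      by (intro sum_mono mult_left_mono) (auto simp: abs_le_square_iff[symmetric])
    also have "\<dots> \<le> Rm" using ps[OF i] Rm[OF i] by (simp add: sum_distrib_right[symmetric])
    finally show ?thesis unfolding x_def by (intro divide_right_mono mult_left_mono) auto
  qed
  have uRm: "u^2 * Rm / 2 = t^2 * Rm / s^2 / 2" unfolding u_def by (simp add: power_divide)
  have uRm2: "u^2 * Rm / 2 \<le> 2" unfolding uRm using divide_right_mono[OF small, of 2] by simp
  have "(\<Sum>i<I. x i) = u^2 / 2 * (\<Sum>i<I. \<Sum>j<n i. p i j * (d i j)^2)"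
    unfolding x_def by (simp add: sum_distrib_left sum_divide_distrib)
  also have "\<dots> = t^2 / 2" using spos unfolding s2[symmetric] u_def by (simp add: power_divide)
  finally have sumx: "(\<Sum>i<I. x i) = t^2 / 2" .
  have "cmod ((\<Prod>i<I. \<Sum>j<n i. complex_of_real (p i j) * iexp (u * d i j))
      - (\<Prod>i<I. complex_of_real (1 - x i))) \<le> \<bar>u\<bar>^3 * sqrt Rm * s^2 / 6"
    unfolding x_def s2
  proof (rule norm_prod_char_minus_prod_quadratic_le[OF pnn ps pd db])
    show "R i \<le> sqrt Rm" if "i < I" for i using Rm[OF that] Rnn[OF that] real_le_rsqrt by blast
    show "u^2 * (\<Sum>j<n i. p i j * (d i j)^2) \<le> 4" if "i < I" for i
      using xle[OF that] uRm2 unfolding x_def by linarith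
  qed
  also have "\<bar>u\<bar>^3 * sqrt Rm * s^2 / 6 = \<bar>t\<bar>^3 / 6 * sqrt (Rm / s^2)"
    using spos unfolding u_def
    by (simp add: real_sqrt_divide power_divide abs_divide field_simps power2_eq_square power3_eq_cube)
  finally have char_quadratic: "cmod ((\<Prod>i<I. \<Sum>j<n i. complex_of_real (p i j) * iexp (u * d i j))
      - (\<Prod>i<I. complex_of_real (1 - x i))) \<le> \<bar>t\<bar>^3 / 6 * sqrt (Rm / s^2)" .
  have "\<bar>(\<Prod>i<I. 1 - x i) - exp (-(t^2)/2)\<bar> \<le> u^2 * Rm / 2 * (t^2 / 2) / 2"
    using abs_prod_one_minus_exp_le[of "{..<I}" x "u^2 * Rm / 2"] xnn xle uRm2 by (simp add: sumx)
  also have "\<dots> = t^4 / 8 * (Rm / s^2)"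
    unfolding uRm by (simp add: field_simps power2_eq_square power4_eq_xxxx)
  finally have quadratic_gauss: "\<bar>(\<Prod>i<I. 1 - x i) - exp (-(t^2)/2)\<bar> \<le> t^4 / 8 * (Rm / s^2)" .
  let ?\<phi> = "\<Prod>i<I. \<Sum>j<n i. complex_of_real (p i j) * iexp (u * d i j)"
  have "cmod (?\<phi> - complex_of_real (exp (-(t^2)/2)))
      \<le> cmod (?\<phi> - (\<Prod>i<I. complex_of_real (1 - x i)))
        + cmod ((\<Prod>i<I. complex_of_real (1 - x i)) - complex_of_real (exp (-(t^2)/2)))"
    by (rule norm_diff_triangle_ineq[THEN order.trans[rotated]]) simp
  also have "cmod ((\<Prod>i<I. complex_of_real (1 - x i)) - complex_of_real (exp (-(t^2)/2)))
      = \<bar>(\<Prod>i<I. 1 - x i) - exp (-(t^2)/2)\<bar>"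
    by (simp flip: of_real_prod of_real_diff)
  finally show ?thesis using char_quadratic quadratic_gauss unfolding u_def by linarith
qed

lemma clt_char_tendsto:
  fixes n :: "nat \<Rightarrow> nat \<Rightarrow> nat" and p d :: "nat \<Rightarrow> nat \<Rightarrow> nat \<Rightarrow> real"
    and R :: "nat \<Rightarrow> nat \<Rightarrow> real" and Rm s :: "nat \<Rightarrow> real" and t :: real
  assumes pnn: "\<And>I i j. i < I \<Longrightarrow> j < n I i \<Longrightarrow> 0 \<le> p I i j"
    and ps: "\<And>I i. i < I \<Longrightarrow> (\<Sum>j<n I i. p I i j) = 1"
    and pd: "\<And>I i. i < I \<Longrightarrow> (\<Sum>j<n I i. p I i j * d I i j) = 0"
    and db: "\<And>I i j. i < I \<Longrightarrow> j < n I i \<Longrightarrow> \<bar>d I i j\<bar> \<le> R I i"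
    and Rm: "\<And>I i. i < I \<Longrightarrow> (R I i)^2 \<le> Rm I"
    and Rnn: "\<And>I i. i < I \<Longrightarrow> 0 \<le> R I i"
    and s2: "\<And>I. (s I)^2 = (\<Sum>i<I. \<Sum>j<n I i. p I i j * (d I i j)^2)"
    and spos: "eventually (\<lambda>I. 0 < s I) sequentially"
    and lindeberg: "(\<lambda>I. Rm I / (s I)^2) \<longlonglongrightarrow> 0"
  shows "(\<lambda>I. \<Prod>i<I. \<Sum>j<n I i. complex_of_real (p I i j) * iexp (t / s I * d I i j))
         \<longlonglongrightarrow> complex_of_real (exp (-(t^2)/2))"
proof -
  let ?g = "\<lambda>I. \<bar>t\<bar>^3 / 6 * sqrt (Rm I / (s I)^2) + t^4 / 8 * (Rm I / (s I)^2)"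
  have "?g \<longlonglongrightarrow> \<bar>t\<bar>^3 / 6 * 0 + t^4 / 8 * 0"
    by (intro tendsto_add tendsto_mult tendsto_const lindeberg tendsto_real_sqrt[OF lindeberg, simplified])
  then have g0: "?g \<longlonglongrightarrow> 0" by simp
  have "eventually (\<lambda>I. Rm I / (s I)^2 < 4 / (t^2 + 1)) sequentially"
    by (rule order_tendstoD(2)[OF lindeberg]) (simp add: add_nonneg_pos)
  then have "eventually (\<lambda>I. t^2 * Rm I / (s I)^2 \<le> 4) sequentially"
  proof eventually_elim
    case (elim I)
    have "t^2 * (Rm I / (s I)^2) \<le> t^2 * (4 / (t^2 + 1))"
      using elim by (intro mult_left_mono) auto
    also have "\<dots> \<le> 4" by (simp add: field_simps add_pos_nonneg)
    finally show ?case by simp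
  qed
  with spos have "eventually (\<lambda>I. norm ((\<Prod>i<I. \<Sum>j<n I i. complex_of_real (p I i j) * iexp (t / s I * d I i j))
      - complex_of_real (exp (-(t^2)/2))) \<le> ?g I) sequentially"
  proof eventually_elim
    case (elim I)
    show ?case by (rule clt_char_error_bound[where R = "R I"]) (use elim pnn ps pd db Rm Rnn s2 in auto)
  qed
  then have "(\<lambda>I. (\<Prod>i<I. \<Sum>j<n I i. complex_of_real (p I i j) * iexp (t / s I * d I i j))
      - complex_of_real (exp (-(t^2)/2))) \<longlonglongrightarrow> 0"
    by (rule Lim_null_comparison[OF _ g0])
  then show ?thesis by (rule LIM_zero_cancel)
qed

lemma clt_cdf_tendsto:
  fixes n :: "nat \<Rightarrow> nat \<Rightarrow> nat" and p d :: "nat \<Rightarrow> nat \<Rightarrow> nat \<Rightarrow> real"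
    and R :: "nat \<Rightarrow> nat \<Rightarrow> real" and Rm s :: "nat \<Rightarrow> real" and x :: real
  assumes pnn: "\<And>I i j. i < I \<Longrightarrow> j < n I i \<Longrightarrow> 0 \<le> p I i j"
    and ps: "\<And>I i. i < I \<Longrightarrow> (\<Sum>j<n I i. p I i j) = 1"
    and pd: "\<And>I i. i < I \<Longrightarrow> (\<Sum>j<n I i. p I i j * d I i j) = 0"
    and db: "\<And>I i j. i < I \<Longrightarrow> j < n I i \<Longrightarrow> \<bar>d I i j\<bar> \<le> R I i"
    and Rm: "\<And>I i. i < I \<Longrightarrow> (R I i)^2 \<le> Rm I"
    and Rnn: "\<And>I i. i < I \<Longrightarrow> 0 \<le> R I i"
    and s2: "\<And>I. (s I)^2 = (\<Sum>i<I. \<Sum>j<n I i. p I i j * (d I i j)^2)"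
    and spos: "eventually (\<lambda>I. 0 < s I) sequentially"
    and lindeberg: "(\<lambda>I. Rm I / (s I)^2) \<longlonglongrightarrow> 0"
  shows "(\<lambda>I. design_prob I (n I) (p I) (\<lambda>z. (\<Sum>i<I. d I i (z i)) / s I \<le> x)) \<longlonglongrightarrow> Phi x"
proof -
  let ?\<Omega> = "\<lambda>I. PiE {..<I} (\<lambda>i. {..<n I i})"
  have "\<exists>M. real_distribution M
      \<and> (\<forall>x. cdf M x = design_prob I (n I) (p I) (\<lambda>z. (\<Sum>i<I. d I i (z i)) / s I \<le> x))
      \<and> (\<forall>t. char M t = (\<Prod>i<I. \<Sum>j<n I i. complex_of_real (p I i j) * iexp (t / s I * d I i j)))" for I
    unfolding design_prob_def char_design_factorization[symmetric]
  proof (rule finite_support_real_distribution)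
    show "finite (?\<Omega> I)" by (simp add: finite_PiE)
    show "0 \<le> (\<Prod>i<I. p I i (z i))" if "z \<in> ?\<Omega> I" for z
      by (rule design_weights_nonneg[where p = "p I"]) (use pnn that in auto)
    show "(\<Sum>z\<in>?\<Omega> I. \<Prod>i<I. p I i (z i)) = 1"
      by (rule design_weights_sum) (use ps in auto)
  qed
  then obtain M where M: "\<And>I. real_distribution (M I)"
    and cdf_M: "\<And>I x. cdf (M I) x = design_prob I (n I) (p I) (\<lambda>z. (\<Sum>i<I. d I i (z i)) / s I \<le> x)"
    and char_M: "\<And>I t. char (M I) t = (\<Prod>i<I. \<Sum>j<n I i. complex_of_real (p I i j) * iexp (t / s I * d I i j))"
    by metis
  have "weak_conv_m M std_normal_distribution"
  proof (rule levy_continuity[OF M real_dist_normal_dist])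
    show "(\<lambda>I. char (M I) t) \<longlonglongrightarrow> char std_normal_distribution t" for t
      unfolding char_M char_std_normal_distribution
      by (rule clt_char_tendsto[OF pnn ps pd db Rm Rnn s2 spos lindeberg])
  qed
  then have "(\<lambda>I. cdf (M I) x) \<longlonglongrightarrow> cdf std_normal_distribution x"
    using isCont_Phi unfolding weak_conv_m_def weak_conv_def Phi_def[abs_def] by blast
  then show ?thesis unfolding cdf_M Phi_def .
qed

section \<open>Means and variances of one matched set\<close>

lemma qs_mono: "i \<le> j \<Longrightarrow> j < n \<Longrightarrow> qs q n i \<le> qs q n j"
  unfolding qs_def by (rule sorted_nth_mono) auto

lemma qs_attained: "k < n \<Longrightarrow> \<exists>j<n. qs q n k = q j"
proof -
  assume "k < n"
  then have "qs q n k \<in> set (sort (map q [0..<n]))" unfolding qs_def by (intro nth_mem) simp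
  then show ?thesis by auto
qed

lemma qs_bounds: "j < n \<Longrightarrow> qs q n 0 \<le> q j \<and> q j \<le> qs q n (n - 1)"
proof -
  assume "j < n"
  then have "q j \<in> set (sort (map q [0..<n]))" by simp
  then obtain k where "k < length (sort (map q [0..<n]))" "sort (map q [0..<n]) ! k = q j"
    by (metis in_set_conv_nth)
  then have "k < n" "qs q n k = q j" unfolding qs_def by auto
  then show ?thesis using qs_mono[of 0 k n q] qs_mono[of k "n - 1" n q] by auto
qed

lemma rangeR_nonneg: "0 < n \<Longrightarrow> 0 \<le> rangeR q n"
  using qs_mono[of 0 "n - 1" n q] unfolding rangeR_def by simp

lemma sum_comp_qs: "(\<Sum>j<n. f (q j)) = (\<Sum>k<n. f (qs q n k))"
proof -
  let ?L = "sort (map q [0..<n])"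
  have "(\<Sum>j<n. f (q j)) = sum_list (map (\<lambda>j. f (q j)) [0..<n])"
    by (simp add: sum_set_upt_conv_sum_list_nat[symmetric] atLeast0LessThan)
  also have "\<dots> = sum_mset (image_mset f (mset (map q [0..<n])))"
    by (simp add: sum_mset_sum_list[symmetric] comp_def multiset.map_comp)
  also have "\<dots> = sum_mset (image_mset f (mset ?L))" by simp
  also have "\<dots> = sum_list (map f ?L)" by (simp add: sum_mset_sum_list[symmetric] mset_map)
  also have "\<dots> = (\<Sum>k<n. f (qs q n k))"
    by (simp add: sum_list_sum_nth qs_def atLeast0LessThan)
  finally show ?thesis .
qed

lemma qs_threshold_split:
  fixes q :: "nat \<Rightarrow> real" and c :: real
  obtains a where "a \<le> n" and "\<And>k. k < a \<Longrightarrow> qs q n k \<le> c"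
    and "\<And>k. a \<le> k \<Longrightarrow> k < n \<Longrightarrow> c < qs q n k"
proof -
  let ?L = "sort (map q [0..<n])"
  define a where "a = length (takeWhile (\<lambda>y. y \<le> c) ?L)"
  have "a \<le> n" unfolding a_def using length_takeWhile_le[of "\<lambda>y. y \<le> c" ?L] by simp
  moreover have "qs q n k \<le> c" if "k < a" for k
    using that set_takeWhileD[OF nth_mem[of k "takeWhile (\<lambda>y. y \<le> c) ?L"]]
    unfolding a_def qs_def by (simp add: takeWhile_nth)
  moreover have "c < qs q n k" if "a \<le> k" "k < n" for k
  proof -
    have "\<not> ?L ! a \<le> c" unfolding a_def using that by (intro nth_length_takeWhile) (simp add: a_def)
    then show ?thesis using qs_mono[of a k n q] that unfolding qs_def by simp
  qed
  ultimately show thesis using that by blast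
qed

lemma mu_true_bounds:
  assumes pnn: "\<And>j. j < n \<Longrightarrow> 0 \<le> p j" and ps: "(\<Sum>j<n. p j) = 1"
  shows "qs q n 0 \<le> mu_true p q n" and "mu_true p q n \<le> qs q n (n - 1)"
proof -
  have "qs q n 0 = (\<Sum>j<n. p j * qs q n 0)" using ps by (simp add: sum_distrib_right[symmetric])
  also have "\<dots> \<le> (\<Sum>j<n. p j * q j)" using qs_bounds pnn by (intro sum_mono mult_left_mono) auto
  finally show "qs q n 0 \<le> mu_true p q n" by (simp add: mu_true_def)
  have "(\<Sum>j<n. p j * q j) \<le> (\<Sum>j<n. p j * qs q n (n - 1))"
    using qs_bounds pnn by (intro sum_mono mult_left_mono) auto
  also have "\<dots> = qs q n (n - 1)" using ps by (simp add: sum_distrib_right[symmetric])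
  finally show "mu_true p q n \<le> qs q n (n - 1)" by (simp add: mu_true_def)
qed

text \<open>If the split point \<open>a\<close> of the sorted scores at \<open>c\<close> lies in \<open>{1..n-1}\<close>, the tilted
  deviations sum to \<open>(a + g (n - a)) (mu_a q n g a - c)\<close>; the split \<open>a = 0\<close> would force
  \<open>mu_a q n g 1 > c\<close>.\<close>

lemma tilted_deviations_nonpos:
  fixes q :: "nat \<Rightarrow> real" and g c :: real
  assumes n2: "2 \<le> n" and g1: "1 \<le> g" and c: "\<And>a. a \<in> {1..n-1} \<Longrightarrow> mu_a q n g a \<le> c"
  shows "(\<Sum>j<n. (if c < q j then g else 1) * (q j - c)) \<le> 0"
proof -
  obtain a where an: "a \<le> n" and lo: "\<And>k. k < a \<Longrightarrow> qs q n k \<le> c"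
    and hi: "\<And>k. a \<le> k \<Longrightarrow> k < n \<Longrightarrow> c < qs q n k"
    using qs_threshold_split[where n = n and q = q and c = c] by blast
  have split_at_a: "(\<Sum>k<n. f k) = (\<Sum>k<a. f k) + (\<Sum>k\<in>{a..<n}. f k)" for f :: "nat \<Rightarrow> real"
    using sum.atLeastLessThan_concat[of 0 a n f] an by (simp add: atLeast0LessThan)
  have "(\<Sum>j<n. (if c < q j then g else 1) * (q j - c))
      = (\<Sum>k<a. (if c < qs q n k then g else 1) * (qs q n k - c))
        + (\<Sum>k\<in>{a..<n}. (if c < qs q n k then g else 1) * (qs q n k - c))"
    unfolding sum_comp_qs[where f = "\<lambda>y. (if c < y then g else 1) * (y - c)" and n = n and q = q]
    by (rule split_at_a)
  also have "(\<Sum>k<a. (if c < qs q n k then g else 1) * (qs q n k - c)) = (\<Sum>k<a. qs q n k - c)"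
    using lo by (intro sum.cong) (auto simp: not_less[symmetric])
  also have "(\<Sum>k\<in>{a..<n}. (if c < qs q n k then g else 1) * (qs q n k - c))
      = g * (\<Sum>k\<in>{a..<n}. qs q n k - c)"
    using hi by (auto simp: sum_distrib_left intro!: sum.cong)
  finally have split: "(\<Sum>j<n. (if c < q j then g else 1) * (q j - c))
      = (\<Sum>k<a. qs q n k - c) + g * (\<Sum>k\<in>{a..<n}. qs q n k - c)" .
  consider "a = 0" | "a = n" | "1 \<le> a" "a \<le> n - 1" using an by linarith
  then show ?thesis
  proof cases
    case 1
    have "(\<Sum>k\<in>{1..<n}. c) \<le> (\<Sum>k\<in>{1..<n}. qs q n k)"
      using hi 1 by (intro sum_mono) (auto intro: less_imp_le)
    then have "c * real (n - 1) \<le> (\<Sum>k\<in>{1..<n}. qs q n k)" by (simp add: mult.commute)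
    then have "c + g * (c * real (n - 1)) < qs q n 0 + g * (\<Sum>k\<in>{1..<n}. qs q n k)"
      using hi[of 0] 1 n2 g1 by (intro add_less_le_mono mult_left_mono) auto
    then have "c * (real 1 + g * real (n - 1)) < (\<Sum>j<1. qs q n j) + g * (\<Sum>j\<in>{1..<n}. qs q n j)"
      by (simp add: algebra_simps)
    moreover have "0 < real 1 + g * real (n - 1)" using g1 by (simp add: add_pos_nonneg)
    ultimately have "c < mu_a q n g 1" by (simp add: mu_a_def pos_less_divide_eq)
    moreover have "mu_a q n g 1 \<le> c" using n2 by (intro c) auto
    ultimately show ?thesis by simp
  next
    case 2
    have "(\<Sum>k<n. qs q n k - c) \<le> 0" using lo 2 by (intro sum_nonpos) auto
    then show ?thesis using split 2 by simp
  next
    case 3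
    define D where "D = real a + g * real (n - a)"
    have Dpos: "0 < D" unfolding D_def using 3 g1 by (simp add: add_pos_nonneg)
    have "(\<Sum>k<a. qs q n k - c) + g * (\<Sum>k\<in>{a..<n}. qs q n k - c)
        = ((\<Sum>k<a. qs q n k) + g * (\<Sum>k\<in>{a..<n}. qs q n k)) - c * D"
      unfolding D_def using an by (simp add: sum_subtractf algebra_simps of_nat_diff)
    also have "\<dots> = D * (mu_a q n g a - c)"
      unfolding mu_a_def D_def[symmetric] using Dpos by (simp add: field_simps)
    also have "\<dots> \<le> 0" using Dpos c[of a] 3 by (intro mult_nonneg_nonpos) auto
    finally show ?thesis using split by simp
  qed
qed

text \<open>\<open>p j \<le> g * Min p\<close>, so the true mean exceeds \<open>c = mu_G\<close> by at most
  \<open>Min p\<close> times the tilted deviations from \<open>c\<close>.\<close>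

lemma mu_true_le_mu_G:
  fixes p q :: "nat \<Rightarrow> real" and n :: nat and G :: ereal
  assumes n2: "2 \<le> n" and pnn: "\<And>j. j < n \<Longrightarrow> 0 \<le> p j" and ps: "(\<Sum>j<n. p j) = 1"
    and Gs: "Gstar p n \<le> G"
  shows "mu_true p q n \<le> mu_G q n G"
proof (cases "G = \<infinity>")
  case True
  then show ?thesis using mu_true_bounds(2)[OF pnn ps] by (simp add: mu_G_def)
next
  case False
  let ?pm = "Min (p ` {..<n})" and ?pM = "Max (p ` {..<n})"
  have pm: "?pm \<le> p j" "p j \<le> ?pM" if "j < n" for j using that by auto
  have pmpos: "0 < ?pm" using Gs False by (auto simp: Gstar_def split: if_splits)
  then obtain g where G: "G = ereal g" and "?pM / ?pm \<le> g"
    using Gs False by (cases G) (auto simp: Gstar_def)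
  then have pMg: "?pM \<le> g * ?pm" using pmpos by (simp add: divide_le_eq)
  have "0 < n" using n2 by simp
  then have "?pm \<le> g * ?pm" using pm[of 0] pMg by linarith
  then have g1: "1 \<le> g" using pmpos by (simp add: mult_le_cancel_right1)
  define c where "c = mu_G q n G"
  have c: "mu_a q n g a \<le> c" if "a \<in> {1..n-1}" for a
    unfolding c_def mu_G_def using G that by (auto intro: Max_ge)
  have "mu_true p q n - c = (\<Sum>j<n. p j * (q j - c))"
    using ps by (simp add: mu_true_def algebra_simps sum_subtractf sum_distrib_left[symmetric])
  also have "\<dots> \<le> (\<Sum>j<n. ?pm * ((if c < q j then g else 1) * (q j - c)))"
  proof (rule sum_mono)
    fix j assume "j \<in> {..<n}"
    then have j: "j < n" by simp
    show "p j * (q j - c) \<le> ?pm * ((if c < q j then g else 1) * (q j - c))"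
    proof (cases "c < q j")
      case True
      have "p j * (q j - c) \<le> g * ?pm * (q j - c)"
        using True pm[OF j] pMg by (intro mult_right_mono) auto
      then show ?thesis using True by (simp add: ac_simps)
    next
      case False
      then show ?thesis using pm[OF j] by (simp add: mult_right_mono_neg)
    qed
  qed
  also have "\<dots> \<le> 0"
    using tilted_deviations_nonpos[OF n2 g1 c] pmpos
    by (simp add: sum_distrib_left[symmetric] mult_nonneg_nonpos)
  finally show ?thesis unfolding c_def by simp
qed

lemma v2_true_eq_sum_sq_dev:
  assumes "(\<Sum>j<n. p j) = 1"
  shows "v2_true p q n = (\<Sum>j<n. p j * (q j - mu_true p q n)^2)"
proof -
  let ?m = "mu_true p q n"
  have "(\<Sum>j<n. p j * (q j - ?m)^2)
      = (\<Sum>j<n. p j * (q j)^2) - 2 * ?m * (\<Sum>j<n. p j * q j) + ?m^2 * (\<Sum>j<n. p j)"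
    by (simp add: power2_diff algebra_simps sum.distrib sum_subtractf sum_distrib_left sum_distrib_right)
  then show ?thesis using assms by (simp add: v2_true_def mu_true_def power2_eq_square)
qed

lemma v2_true_nonneg:
  assumes "\<And>j. j < n \<Longrightarrow> 0 \<le> p j" and "(\<Sum>j<n. p j) = 1"
  shows "0 \<le> v2_true p q n"
  unfolding v2_true_eq_sum_sq_dev[OF assms(2)] using assms(1) by (intro sum_nonneg mult_nonneg_nonneg) auto

lemma abs_q_minus_mu_true_le_rangeR:
  assumes "\<And>j. j < n \<Longrightarrow> 0 \<le> p j" and "(\<Sum>j<n. p j) = 1" and "j < n"
  shows "\<bar>q j - mu_true p q n\<bar> \<le> rangeR q n"
  using mu_true_bounds[OF assms(1,2), of q] qs_bounds[OF assms(3), of q]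
  unfolding rangeR_def by (simp add: abs_le_iff)

text \<open>The two units with extreme scores each carry probability at least \<open>Min p\<close>, and their
  deviations from the mean differ by the range, whence \<open>(a - b)\<^sup>2 / 2 \<le> a\<^sup>2 + b\<^sup>2\<close> applies.\<close>

lemma Min_mult_rangeR_sq_le_v2_true:
  assumes pnn: "\<And>j. j < n \<Longrightarrow> 0 \<le> p j" and ps: "(\<Sum>j<n. p j) = 1" and n0: "0 < n"
  shows "Min (p ` {..<n}) * (rangeR q n)^2 / 2 \<le> v2_true p q n"
proof -
  let ?pm = "Min (p ` {..<n})" and ?m = "mu_true p q n"
  have pm: "?pm \<le> p j" if "j < n" for j using that by auto
  have pm0: "0 \<le> ?pm" using pnn n0 by (subst Min_ge_iff) auto
  obtain j0 where j0: "j0 < n" "q j0 = qs q n 0" using qs_attained[OF n0, of q] by metis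
  obtain j1 where j1: "j1 < n" "q j1 = qs q n (n - 1)" using qs_attained[of "n - 1" n q] n0 by auto
  show ?thesis
  proof (cases "j0 = j1")
    case True
    then show ?thesis using j0 j1 v2_true_nonneg[OF pnn ps, of q] by (simp add: rangeR_def)
  next
    case False
    have "(rangeR q n)^2 / 2 \<le> (q j0 - ?m)^2 + (q j1 - ?m)^2"
    proof -
      have "(rangeR q n)^2 / 2 = ((q j1 - ?m) - (q j0 - ?m))^2 / 2"
        using j0 j1 by (simp add: rangeR_def)
      also have "\<dots> = (q j0 - ?m)^2 + (q j1 - ?m)^2 - ((q j1 - ?m) + (q j0 - ?m))^2 / 2"
        by (simp add: power2_eq_square field_simps)
      finally show ?thesis by simp
    qed
    then have "?pm * ((rangeR q n)^2 / 2) \<le> ?pm * ((q j0 - ?m)^2 + (q j1 - ?m)^2)"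
      using pm0 by (rule mult_left_mono)
    then have "?pm * (rangeR q n)^2 / 2 \<le> ?pm * (q j0 - ?m)^2 + ?pm * (q j1 - ?m)^2"
      by (simp add: distrib_left)
    also have "\<dots> \<le> p j0 * (q j0 - ?m)^2 + p j1 * (q j1 - ?m)^2"
      using pm[OF j0(1)] pm[OF j1(1)] by (intro add_mono mult_right_mono) auto
    also have "\<dots> = (\<Sum>j\<in>{j0, j1}. p j * (q j - ?m)^2)" using False by simp
    also have "\<dots> \<le> (\<Sum>j<n. p j * (q j - ?m)^2)"
      using j0 j1 pnn by (intro sum_mono2) auto
    also have "\<dots> = v2_true p q n" by (rule v2_true_eq_sum_sq_dev[OF ps, symmetric])
    finally show ?thesis .
  qed
qed

lemma wA1_le_twice_v2_true:
  assumes pnn: "\<And>j. j < n \<Longrightarrow> 0 \<le> p j" and ps: "(\<Sum>j<n. p j) = 1" and n0: "0 < n"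
  shows "wA1 p q n / 2 \<le> v2_true p q n"
proof (cases "0 < Min (p ` {..<n})")
  case False
  then show ?thesis using v2_true_nonneg[OF pnn ps, of q] by (simp add: wA1_def Gstar_def)
next
  case True
  let ?pm = "Min (p ` {..<n})" and ?pM = "Max (p ` {..<n})"
  define g where "g = ?pM / ?pm"
  define R where "R = rangeR q n"
  have w: "wA1 p q n = R^2 / (real n * g)^3"
    unfolding wA1_def Gstar_def g_def R_def using True by simp
  have "1 = (\<Sum>j<n. p j)" using ps by simp
  also have "\<dots> \<le> (\<Sum>j<n. ?pM)" by (intro sum_mono) auto
  finally have npM: "1 \<le> real n * ?pM" by simp
  have ng: "real n * g * ?pm = real n * ?pM" unfolding g_def using True by simp
  have "?pm \<le> p 0" "p 0 \<le> ?pM" using n0 by auto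
  then have "?pm \<le> ?pM" by linarith
  then have "1 \<le> g" unfolding g_def using True by (simp add: le_divide_eq)
  then have ng1: "1 \<le> real n * g" using n0 mult_mono[of 1 "real n" 1 g] by simp
  have "R^2 / (real n * g)^3 \<le> R^2 / (real n * g)"
  proof (rule divide_left_mono)
    have "real n * g * 1 \<le> real n * g * (real n * g)^2"
      using ng1 one_le_power[OF ng1, of 2] by (intro mult_left_mono) auto
    then show "real n * g \<le> (real n * g)^3" by (simp add: power2_eq_square power3_eq_cube)
  qed (use ng1 in auto)
  also have "R^2 / (real n * g) \<le> ?pm * R^2"
  proof -
    have "R^2 * 1 \<le> R^2 * (real n * ?pM)" using npM by (intro mult_left_mono) auto
    also have "\<dots> = R^2 * (real n * g * ?pm)" by (simp only: ng)
    also have "\<dots> = ?pm * R^2 * (real n * g)" by (simp add: ac_simps)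
    finally show ?thesis using ng1 by (simp add: divide_le_eq)
  qed
  finally show ?thesis
    using w Min_mult_rangeR_sq_le_v2_true[OF pnn ps n0, of q] unfolding R_def by simp
qed

lemma one_le_Gstar:
  assumes "0 < n"
  shows "1 \<le> Gstar p n"
proof -
  have "Min (p ` {..<n}) \<le> p 0" "p 0 \<le> Max (p ` {..<n})" using assms by auto
  then show ?thesis by (auto simp: Gstar_def le_divide_eq)
qed

lemma v2_a_nonneg:
  fixes q :: "nat \<Rightarrow> real" and g :: real
  assumes g: "0 \<le> g" and an: "a \<le> n" and D: "0 < real a + g * real (n - a)"
  shows "0 \<le> v2_a q n g a"
proof -
  define D where "D = real a + g * real (n - a)"
  define w where "w k = (if k < a then 1 else g) / D" for k
  have weighted: "(\<Sum>k<n. w k * f k) = ((\<Sum>k<a. f k) + g * (\<Sum>k\<in>{a..<n}. f k)) / D" for f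
  proof -
    have "(\<Sum>k<n. w k * f k) = (\<Sum>k<a. w k * f k) + (\<Sum>k\<in>{a..<n}. w k * f k)"
      using sum.atLeastLessThan_concat[of 0 a n "\<lambda>k. w k * f k"] an by (simp add: atLeast0LessThan)
    also have "\<dots> = ((\<Sum>k<a. f k) + g * (\<Sum>k\<in>{a..<n}. f k)) / D"
      by (simp add: w_def add_divide_distrib sum_divide_distrib sum_distrib_left)
    finally show ?thesis .
  qed
  have "(\<Sum>k<n. w k) = 1"
    using weighted[of "\<lambda>_. 1"] D an by (simp add: D_def)
  moreover have "0 \<le> w k" for k using g D by (simp add: w_def D_def)
  ultimately have "0 \<le> v2_true w (qs q n) n" by (intro v2_true_nonneg)
  moreover have "v2_a q n g a = v2_true w (qs q n) n"
    unfolding v2_a_def v2_true_def mu_true_def mu_a_def weighted D_def ..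
  ultimately show ?thesis by simp
qed

lemma v2_G_nonneg:
  assumes n2: "2 \<le> n" and G: "1 \<le> G"
  shows "0 \<le> v2_G q n G"
proof (cases "G = \<infinity>")
  case True
  then show ?thesis by (simp add: v2_G_def)
next
  case False
  with G obtain g where g: "G = ereal g" "1 \<le> g" by (cases G) auto
  have "mu_G q n G \<in> mu_a q n g ` {1..n-1}"
    unfolding mu_G_def using g n2 by (auto intro!: Max_in)
  then obtain a where a: "a \<in> {1..n-1}" "mu_a q n g a = mu_G q n G" by auto
  have "0 \<le> v2_a q n g a" using a g by (intro v2_a_nonneg) (auto intro: add_pos_nonneg)
  also have "\<dots> \<le> v2_G q n G" unfolding v2_G_def using g a by (auto intro: Max_ge)
  finally show ?thesis .
qed

lemma sum_v2_G_nonneg: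
  assumes "\<And>i. i < I \<Longrightarrow> 2 \<le> n i" and "\<And>i. i < I \<Longrightarrow> Gstar (p i) (n i) \<le> G i"
  shows "0 \<le> (\<Sum>i<I. v2_G (q i) (n i) (G i))"
proof (intro sum_nonneg v2_G_nonneg)
  fix i assume "i \<in> {..<I}"
  then have "2 \<le> n i" "Gstar (p i) (n i) \<le> G i" using assms by auto
  moreover have "1 \<le> Gstar (p i) (n i)" using \<open>2 \<le> n i\<close> by (intro one_le_Gstar) simp
  ultimately show "2 \<le> n i" "1 \<le> G i" by (auto intro: order_trans)
qed

section \<open>Asymptotic size of the test\<close>

lemma mult_sd_le_of_var_gap:
  fixes a s \<sigma> D V :: real
  assumes "0 \<le> a" "0 < s" "0 \<le> \<sigma>" "\<sigma> < s" "s^2 - \<sigma>^2 \<le> V" "a * V \<le> D * s"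
  shows "a * s \<le> a * \<sigma> + D"
proof -
  have "a * (s - \<sigma>) * s \<le> a * ((s - \<sigma>) * (s + \<sigma>))"
    using assms(1,3,4) by (simp add: mult_left_mono mult.assoc)
  also have "\<dots> = a * (s^2 - \<sigma>^2)" by (simp add: power2_eq_square algebra_simps)
  also have "\<dots> \<le> D * s" using assms(1,5,6) mult_left_mono[OF assms(5) assms(1)] by linarith
  finally have "a * (s - \<sigma>) \<le> D" using assms(2) by (simp only: mult_le_cancel_right_pos)
  then show ?thesis by (simp add: algebra_simps)
qed

text \<open>The level \<open>a \<surd>2\<close> in A2 suffices because \<open>\<surd>W / \<surd>2 \<le> s = \<surd>(\<Sum> vT)\<close>, and
  \<open>(s - \<sigma>) s \<le> s\<^sup>2 - \<sigma>\<^sup>2\<close> is at most the excess of the variances over the sets in \<open>A\<close>.\<close>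

lemma sd_gap_le_mean_gap:
  fixes I :: nat and muG muT vG vT :: "nat \<Rightarrow> real" and W a :: real
  assumes mu: "\<And>i. i < I \<Longrightarrow> muT i \<le> muG i"
    and W: "0 < W" and vT: "W / 2 \<le> (\<Sum>i<I. vT i)"
    and a: "0 \<le> a" and vG: "0 \<le> (\<Sum>i<I. vG i)"
    and A2: "let A = {i. i < I \<and> vT i > vG i};
                 Dmu = (\<Sum>i\<in>A. muG i - muT i) / real (card A);
                 Dv = (\<Sum>i\<in>A. vT i - vG i) / real (card A)
             in A = {} \<or> Dmu / Dv * sqrt W > a * sqrt 2"
  shows "a * sqrt (\<Sum>i<I. vT i) \<le> a * sqrt (\<Sum>i<I. vG i) + (\<Sum>i<I. muG i - muT i)"
proof -
  define s where "s = sqrt (\<Sum>i<I. vT i)"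
  define \<sigma> where "\<sigma> = sqrt (\<Sum>i<I. vG i)"
  define A where "A = {i. i < I \<and> vT i > vG i}"
  define SMu where "SMu = (\<Sum>i\<in>A. muG i - muT i)"
  define SV where "SV = (\<Sum>i\<in>A. vT i - vG i)"
  have \<Delta>: "SMu \<le> (\<Sum>i<I. muG i - muT i)" "0 \<le> (\<Sum>i<I. muG i - muT i)"
    unfolding SMu_def A_def using mu by (auto intro!: sum_mono2 sum_nonneg)
  have spos: "0 < s" and s2: "s^2 = (\<Sum>i<I. vT i)" unfolding s_def using vT W by simp_all
  have vgap: "s^2 - \<sigma>^2 \<le> SV"
  proof -
    have "(\<Sum>i<I. vT i - vG i) = (\<Sum>i\<in>{..<I} - A. vT i - vG i) + SV"
      unfolding SV_def by (rule sum.subset_diff) (auto simp: A_def)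
    moreover have "(\<Sum>i\<in>{..<I} - A. vT i - vG i) \<le> 0" by (intro sum_nonpos) (auto simp: A_def)
    ultimately show ?thesis using s2 vG by (simp add: \<sigma>_def sum_subtractf)
  qed
  show ?thesis
  proof (cases "s \<le> \<sigma>")
    case True
    then show ?thesis using a \<Delta>(2) mult_left_mono[OF True a] unfolding s_def \<sigma>_def by linarith
  next
    case False
    have "A \<noteq> {}"
    proof
      assume "A = {}"
      then have "\<And>i. i < I \<Longrightarrow> vT i \<le> vG i" unfolding A_def by auto
      then have "(\<Sum>i<I. vT i) \<le> (\<Sum>i<I. vG i)" by (intro sum_mono) auto
      then show False using False unfolding s_def \<sigma>_def by simp
    qed
    then have "0 < real (card A)" and SVpos: "0 < SV"
      unfolding SV_def by (auto simp: A_def card_gt_0_iff intro!: sum_pos)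
    then have ratio: "a * sqrt 2 < SMu / SV * sqrt W"
      using A2 \<open>A \<noteq> {}\<close> unfolding A_def[symmetric] SMu_def[symmetric] SV_def[symmetric] Let_def by simp
    moreover have "0 \<le> a * sqrt 2" using a by simp
    ultimately have "0 < SMu / SV * sqrt W" by linarith
    then have "0 < SMu / SV" using zero_less_mult_pos2[of "SMu / SV" "sqrt W"] W by simp
    then have r0: "0 \<le> SMu / SV" by simp
    have "sqrt W / sqrt 2 \<le> s" unfolding s_def using vT by (simp add: real_sqrt_divide[symmetric])
    then have "SMu / SV * sqrt W \<le> SMu / SV * (s * sqrt 2)"
      using r0 by (intro mult_left_mono) (auto simp: divide_le_eq)
    with ratio have "a * sqrt 2 < (SMu / SV * s) * sqrt 2" by (simp only: mult.assoc)
    then have "a \<le> SMu / SV * s" using mult_less_cancel_right_pos[of "sqrt 2" a "SMu / SV * s"] by simp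
    then have "a * SV \<le> SMu / SV * s * SV" using SVpos by (intro mult_right_mono) auto
    also have "\<dots> = SMu * s" using SVpos by simp
    also have "\<dots> \<le> (\<Sum>i<I. muG i - muT i) * s" using \<Delta>(1) spos by (intro mult_right_mono) auto
    finally have "a * SV \<le> (\<Sum>i<I. muG i - muT i) * s" .
    then show ?thesis
      using mult_sd_le_of_var_gap[OF a spos _ _ vgap] False vG unfolding s_def \<sigma>_def by simp
  qed
qed

lemma ratio_tendsto_0_compare:
  fixes f W V :: "nat \<Rightarrow> real"
  assumes lim: "(\<lambda>I. f I / W I) \<longlonglongrightarrow> 0"
    and ev: "eventually (\<lambda>I. 0 < W I \<and> W I / 2 \<le> V I \<and> 0 \<le> f I) sequentially"
  shows "(\<lambda>I. f I / V I) \<longlonglongrightarrow> 0"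
proof (rule tendsto_sandwich[where f = "\<lambda>_. 0" and h = "\<lambda>I. 2 * (f I / W I)"])
  show "eventually (\<lambda>I. 0 \<le> f I / V I) sequentially"
    using ev by eventually_elim auto
  show "eventually (\<lambda>I. f I / V I \<le> 2 * (f I / W I)) sequentially"
    using ev
  proof eventually_elim
    case (elim I)
    then have "f I / V I \<le> f I / (W I / 2)" by (intro divide_left_mono) auto
    also have "\<dots> = 2 * (f I / W I)" by simp
    finally show ?case .
  qed
  show "(\<lambda>I. 2 * (f I / W I)) \<longlonglongrightarrow> 0" using tendsto_mult_right_zero[OF lim] by simp
qed simp

text \<open>Since every set contributes variance at least \<open>wA1 / 2\<close>, Condition A1 is the Lindeberg
  condition \<open>max R\<^sup>2 / \<Sum> v\<^sup>2 \<rightarrow> 0\<close>.\<close>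

lemma design_clt:
  fixes n :: "nat \<Rightarrow> nat \<Rightarrow> nat" and p q :: "nat \<Rightarrow> nat \<Rightarrow> nat \<Rightarrow> real" and x :: real
  assumes n_pos: "\<And>I i. i < I \<Longrightarrow> 0 < n I i"
    and p_nonneg: "\<And>I i j. i < I \<Longrightarrow> j < n I i \<Longrightarrow> 0 \<le> p I i j"
    and p_sum: "\<And>I i. i < I \<Longrightarrow> (\<Sum>j<n I i. p I i j) = 1"
    and A1_pos: "eventually (\<lambda>I. (\<Sum>i<I. wA1 (p I i) (q I i) (n I i)) > 0) sequentially"
    and A1: "(\<lambda>I. Max ((\<lambda>i. (rangeR (q I i) (n I i))\<^sup>2) ` {..<I})
                  / (\<Sum>i<I. wA1 (p I i) (q I i) (n I i))) \<longlonglongrightarrow> 0"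
  shows "(\<lambda>I. design_prob I (n I) (p I) (\<lambda>z.
            ((\<Sum>i<I. q I i (z i)) - (\<Sum>i<I. mu_true (p I i) (q I i) (n I i)))
              / sqrt (\<Sum>i<I. v2_true (p I i) (q I i) (n I i)) \<le> x))
         \<longlonglongrightarrow> Phi x"
proof -
  define V where "V I = (\<Sum>i<I. v2_true (p I i) (q I i) (n I i))" for I
  define W where "W I = (\<Sum>i<I. wA1 (p I i) (q I i) (n I i))" for I
  define Rm where "Rm I = Max ((\<lambda>i. (rangeR (q I i) (n I i))\<^sup>2) ` {..<I})" for I
  have WV: "W I / 2 \<le> V I" for I
    unfolding W_def V_def sum_divide_distrib
    using n_pos p_nonneg p_sum by (intro sum_mono wA1_le_twice_v2_true) auto
  have V0: "0 \<le> V I" for I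
    unfolding V_def using p_nonneg p_sum by (intro sum_nonneg v2_true_nonneg) auto
  have ev: "eventually (\<lambda>I. 0 < W I \<and> W I / 2 \<le> V I \<and> 0 \<le> Rm I) sequentially"
    using A1_pos
  proof eventually_elim
    case (elim I)
    then have "I \<noteq> 0" by (cases I) auto
    then have "0 \<le> Rm I" unfolding Rm_def by (intro order_trans[OF zero_le_power2 Max_ge]) auto
    with elim WV show ?case unfolding W_def by simp
  qed
  have "(\<lambda>I. design_prob I (n I) (p I) (\<lambda>z.
            (\<Sum>i<I. q I i (z i) - mu_true (p I i) (q I i) (n I i)) / sqrt (V I) \<le> x)) \<longlonglongrightarrow> Phi x"
  proof (rule clt_cdf_tendsto[where R = "\<lambda>I i. rangeR (q I i) (n I i)" and Rm = Rm])
    show "(\<Sum>j<n I i. p I i j * (q I i j - mu_true (p I i) (q I i) (n I i))) = 0" if "i < I" for I i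
      using p_sum[OF that]
      by (simp add: mu_true_def right_diff_distrib sum_subtractf sum_distrib_right[symmetric])
    show "\<bar>q I i j - mu_true (p I i) (q I i) (n I i)\<bar> \<le> rangeR (q I i) (n I i)"
      if "i < I" "j < n I i" for I i j
      using p_nonneg[OF that(1)] p_sum[OF that(1)] that(2) by (rule abs_q_minus_mu_true_le_rangeR)
    show "(sqrt (V I))^2 = (\<Sum>i<I. \<Sum>j<n I i. p I i j * (q I i j - mu_true (p I i) (q I i) (n I i))^2)" for I
      unfolding V_def using V0 p_sum by (simp add: V_def v2_true_eq_sum_sq_dev)
    show "eventually (\<lambda>I. 0 < sqrt (V I)) sequentially"
      using ev by eventually_elim auto
    show "(\<lambda>I. Rm I / (sqrt (V I))^2) \<longlonglongrightarrow> 0"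
      using ratio_tendsto_0_compare[of Rm W V] A1 ev V0 unfolding Rm_def W_def by simp
  qed (use p_nonneg p_sum n_pos in \<open>auto simp: Rm_def intro: rangeR_nonneg Max_ge\<close>)
  then show ?thesis unfolding V_def by (simp add: sum_subtractf)
qed

lemma rejection_region_bound:
  fixes T \<mu> \<sigma> \<alpha> z0 :: real
  assumes reject: "1 - Phi ((T - \<mu>) / \<sigma>) * (if T \<ge> \<mu> then 1 else 0) \<le> \<alpha>" and "\<alpha> < 1"
    and "0 \<le> \<sigma>" and z0: "\<And>y. 1 - \<alpha> \<le> Phi y \<Longrightarrow> z0 \<le> y"
  shows "max z0 0 * \<sigma> \<le> T - \<mu>"
proof -
  have "\<mu> \<le> T" using reject \<open>\<alpha> < 1\<close> by (cases "\<mu> \<le> T") auto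
  then have "z0 \<le> (T - \<mu>) / \<sigma>" using reject by (intro z0) simp
  then show ?thesis
    using \<open>\<mu> \<le> T\<close> \<open>0 \<le> \<sigma>\<close> by (cases "\<sigma> = 0") (auto simp: max_def le_divide_eq)
qed

lemma standardized_ge_of_rejection:
  fixes I :: nat and n :: "nat \<Rightarrow> nat" and p q :: "nat \<Rightarrow> nat \<Rightarrow> real" and G :: "nat \<Rightarrow> ereal"
    and T \<alpha> z0 :: real
  assumes n_ge2: "\<And>i. i < I \<Longrightarrow> 2 \<le> n i"
    and p_nonneg: "\<And>i j. i < I \<Longrightarrow> j < n i \<Longrightarrow> 0 \<le> p i j"
    and p_sum: "\<And>i. i < I \<Longrightarrow> (\<Sum>j<n i. p i j) = 1"
    and Gstar_le: "\<And>i. i < I \<Longrightarrow> Gstar (p i) (n i) \<le> G i"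
    and W: "0 < (\<Sum>i<I. wA1 (p i) (q i) (n i))"
    and A2: "let A = {i. i < I \<and> v2_true (p i) (q i) (n i) > v2_G (q i) (n i) (G i)};
                 Dmu = (\<Sum>i\<in>A. mu_G (q i) (n i) (G i) - mu_true (p i) (q i) (n i)) / real (card A);
                 Dv = (\<Sum>i\<in>A. v2_true (p i) (q i) (n i) - v2_G (q i) (n i) (G i)) / real (card A)
             in A = {} \<or> Dmu / Dv * sqrt (\<Sum>i<I. wA1 (p i) (q i) (n i)) > max z0 0 * sqrt 2"
    and \<alpha>: "\<alpha> < 1" and z0: "\<And>y. 1 - \<alpha> \<le> Phi y \<Longrightarrow> z0 \<le> y"
    and reject: "1 - Phi ((T - (\<Sum>i<I. mu_G (q i) (n i) (G i))) / sqrt (\<Sum>i<I. v2_G (q i) (n i) (G i)))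
                   * (if T \<ge> (\<Sum>i<I. mu_G (q i) (n i) (G i)) then 1 else 0) \<le> \<alpha>"
  shows "max z0 0 \<le> (T - (\<Sum>i<I. mu_true (p i) (q i) (n i))) / sqrt (\<Sum>i<I. v2_true (p i) (q i) (n i))"
proof -
  define a where "a = max z0 0"
  have n_pos: "0 < n i" if "i < I" for i using n_ge2[OF that] by simp
  have WV: "(\<Sum>i<I. wA1 (p i) (q i) (n i)) / 2 \<le> (\<Sum>i<I. v2_true (p i) (q i) (n i))"
    unfolding sum_divide_distrib using n_pos p_nonneg p_sum by (intro sum_mono wA1_le_twice_v2_true) auto
  have vG: "0 \<le> (\<Sum>i<I. v2_G (q i) (n i) (G i))" using n_ge2 Gstar_le by (rule sum_v2_G_nonneg)
  have "a * sqrt (\<Sum>i<I. v2_true (p i) (q i) (n i))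
      \<le> a * sqrt (\<Sum>i<I. v2_G (q i) (n i) (G i))
        + (\<Sum>i<I. mu_G (q i) (n i) (G i) - mu_true (p i) (q i) (n i))"
  proof (rule sd_gap_le_mean_gap[OF _ W WV _ vG A2[folded a_def]])
    show "mu_true (p i) (q i) (n i) \<le> mu_G (q i) (n i) (G i)" if "i < I" for i
      using n_ge2[OF that] p_nonneg[OF that] p_sum[OF that] Gstar_le[OF that] by (rule mu_true_le_mu_G)
  qed (simp add: a_def)
  also have "a * sqrt (\<Sum>i<I. v2_G (q i) (n i) (G i)) \<le> T - (\<Sum>i<I. mu_G (q i) (n i) (G i))"
    unfolding a_def using vG by (intro rejection_region_bound[OF reject \<alpha> _ z0]) simp
  finally have "a * sqrt (\<Sum>i<I. v2_true (p i) (q i) (n i)) \<le> T - (\<Sum>i<I. mu_true (p i) (q i) (n i))"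
    by (simp add: sum_subtractf)
  moreover have "0 < sqrt (\<Sum>i<I. v2_true (p i) (q i) (n i))" using W WV by simp
  ultimately have "a \<le> (T - (\<Sum>i<I. mu_true (p i) (q i) (n i))) / sqrt (\<Sum>i<I. v2_true (p i) (q i) (n i))"
    by (simp add: pos_le_divide_eq)
  then show ?thesis unfolding a_def .
qed

lemma limsup_le_of_tail_bound:
  fixes E :: "nat \<Rightarrow> real" and F :: "nat \<Rightarrow> real \<Rightarrow> real" and H :: "real \<Rightarrow> real" and a :: real
  assumes F: "\<And>x. (\<lambda>I. F I x) \<longlonglongrightarrow> H x" and H: "isCont H a"
    and E: "\<And>\<delta>. 0 < \<delta> \<Longrightarrow> eventually (\<lambda>I. E I \<le> 1 - F I (a - \<delta>)) sequentially"
  shows "limsup (\<lambda>I. ereal (E I)) \<le> ereal (1 - H a)"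
proof (rule LIMSEQ_le_const)
  have "(\<lambda>m. a - inverse (real (Suc m))) \<longlonglongrightarrow> a - 0"
    by (intro tendsto_diff tendsto_const LIMSEQ_inverse_real_of_nat)
  then show "(\<lambda>m. ereal (1 - H (a - inverse (real (Suc m))))) \<longlonglongrightarrow> ereal (1 - H a)"
    using isCont_tendsto_compose[OF H] by (auto intro!: tendsto_intros)
  show "\<exists>N. \<forall>m\<ge>N. limsup (\<lambda>I. ereal (E I)) \<le> ereal (1 - H (a - inverse (real (Suc m))))"
  proof (intro exI allI impI)
    fix m :: nat
    let ?\<delta> = "inverse (real (Suc m))"
    have "limsup (\<lambda>I. ereal (E I)) \<le> limsup (\<lambda>I. ereal (1 - F I (a - ?\<delta>)))"
      using E[of ?\<delta>] by (intro Limsup_mono) (auto elim: eventually_mono)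
    also have "\<dots> = ereal (1 - H (a - ?\<delta>))"
      by (intro lim_imp_Limsup) (auto intro!: tendsto_intros F)
    finally show "limsup (\<lambda>I. ereal (E I)) \<le> ereal (1 - H (a - ?\<delta>))" .
  qed
qed

theorem corollaryA1:
  fixes n :: "nat \<Rightarrow> nat \<Rightarrow> nat"
    and p q :: "nat \<Rightarrow> nat \<Rightarrow> nat \<Rightarrow> real"
    and G :: "nat \<Rightarrow> nat \<Rightarrow> ereal"
    and \<alpha> :: real
  assumes n_ge2: "\<And>I i. i < I \<Longrightarrow> 2 \<le> n I i"
    and p_nonneg: "\<And>I i j. i < I \<Longrightarrow> j < n I i \<Longrightarrow> 0 \<le> p I i j"
    and p_sum: "\<And>I i. i < I \<Longrightarrow> (\<Sum>j<n I i. p I i j) = 1"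
    and Gstar_le: "\<And>I i. i < I \<Longrightarrow> Gstar (p I i) (n I i) \<le> G I i"
    and A1_pos: "eventually (\<lambda>I. (\<Sum>i<I. wA1 (p I i) (q I i) (n I i)) > 0) sequentially"
    and A1: "(\<lambda>I. Max ((\<lambda>i. (rangeR (q I i) (n I i))\<^sup>2) ` {..<I})
                  / (\<Sum>i<I. wA1 (p I i) (q I i) (n I i))) \<longlonglongrightarrow> 0"
    and A2: "\<And>M::real. eventually (\<lambda>I.
              let A = {i. i < I \<and> v2_true (p I i) (q I i) (n I i) > v2_G (q I i) (n I i) (G I i)};
                  Dmu = (\<Sum>i\<in>A. mu_G (q I i) (n I i) (G I i) - mu_true (p I i) (q I i) (n I i))
                          / real (card A);
                  Dv = (\<Sum>i\<in>A. v2_true (p I i) (q I i) (n I i) - v2_G (q I i) (n I i) (G I i))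
                          / real (card A)
              in A = {} \<or> Dmu / Dv * sqrt (\<Sum>i<I. wA1 (p I i) (q I i) (n I i)) > M) sequentially"
    and \<alpha>: "0 < \<alpha>" "\<alpha> < 1"
  shows "limsup (\<lambda>I. ereal
           (\<Sum>z\<in>PiE {..<I} (\<lambda>i. {..<n I i}).
              (\<Prod>i<I. p I i (z i)) *
              (let T = (\<Sum>i<I. q I i (z i));
                   mu = (\<Sum>i<I. mu_G (q I i) (n I i) (G I i));
                   sigma = sqrt (\<Sum>i<I. v2_G (q I i) (n I i) (G I i));
                   pt = 1 - Phi ((T - mu) / sigma) * (if T \<ge> mu then 1 else 0)
               in if pt \<le> \<alpha> then 1 else 0)))
         \<le> ereal \<alpha>"
proof -
  obtain z0 where z0: "1 - \<alpha> \<le> Phi z0" "\<And>y. 1 - \<alpha> \<le> Phi y \<Longrightarrow> z0 \<le> y"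
    using Phi_quantile[of "1 - \<alpha>"] \<alpha> by auto
  define Y where "Y I z = ((\<Sum>i<I. q I i (z i)) - (\<Sum>i<I. mu_true (p I i) (q I i) (n I i)))
                             / sqrt (\<Sum>i<I. v2_true (p I i) (q I i) (n I i))" for I z
  define reject where "reject I z = (let T = (\<Sum>i<I. q I i (z i));
                   mu = (\<Sum>i<I. mu_G (q I i) (n I i) (G I i));
                   sigma = sqrt (\<Sum>i<I. v2_G (q I i) (n I i) (G I i));
                   pt = 1 - Phi ((T - mu) / sigma) * (if T \<ge> mu then 1 else 0)
               in pt \<le> \<alpha>)" for I z
  have clt: "(\<lambda>I. design_prob I (n I) (p I) (\<lambda>z. Y I z \<le> x)) \<longlonglongrightarrow> Phi x" for x
    unfolding Y_def using n_ge2 by (intro design_clt[OF _ p_nonneg p_sum A1_pos A1]) force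
  have "eventually (\<lambda>I. \<forall>z. reject I z \<longrightarrow> max z0 0 \<le> Y I z) sequentially"
    using A1_pos A2[of "max z0 0 * sqrt 2"]
  proof eventually_elim
    case (elim I)
    show ?case unfolding reject_def Y_def Let_def
      by (intro allI impI standardized_ge_of_rejection[where n = "n I" and p = "p I" and q = "q I"
            and G = "G I", OF _ _ _ _ elim \<alpha>(2) z0(2)]) (use n_ge2 p_nonneg p_sum Gstar_le in auto)
  qed
  then have "eventually (\<lambda>I. design_prob I (n I) (p I) (reject I)
      \<le> 1 - design_prob I (n I) (p I) (\<lambda>z. Y I z \<le> max z0 0 - \<delta>)) sequentially" if "0 < \<delta>" for \<delta>
  proof eventually_elim
    case (elim I)
    show ?case by (rule design_prob_le_one_minus) (use elim \<open>0 < \<delta>\<close> p_nonneg p_sum in force)+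
  qed
  then have "limsup (\<lambda>I. ereal (design_prob I (n I) (p I) (reject I))) \<le> ereal (1 - Phi (max z0 0))"
    by (intro limsup_le_of_tail_bound[OF clt isCont_Phi])
  also have "1 - Phi (max z0 0) \<le> \<alpha>" using z0(1) Phi_mono[of z0 "max z0 0"] by simp
  finally show ?thesis unfolding design_prob_def reject_def Let_def by simp
qed

end
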